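(* Let $G$ be a graph that has a compatible tree-representation $\{T(v)\}$. Then $G$ has a simple vertex. Furthermore, any vertex $v$ that maximizes the depth of the root of $T(v)$ (among all vertices of $G$) is a simple vertex.
   Context: Graphs are finite and simple; $N[v]$ denotes the closed neighbourhood of $v$. A host tree $T$ is a rooted tree whose arcs carry positive integer weights; the depth of a node is the sum of arc weights on its path to the root. A subtree is a connected node set of $T$; its root is its node of smallest depth. A tree-representation of $G$ assigns to each vertex $v$ a subtree $T(v)$ of $T$ such that for distinct $v,w$, $(v,w)$ is an edge iff $T(v)\cap T(w)\neq\emptyset$. For subtrees $T_1,T_2$, $T_1$ overshadows $T_2$ if every node of $T_2\setminus T_1$ has depth strictly greater than every node of $T_2\cap T_1$. A tree-representation is compatible if for every two vertices $v,w$, $T(v)$ overshadows $T(w)$ or $T(w)$ overshadows $T(v)$. A vertex $v$ is simple if $N[v]$ can be ordered as $u_1,\dots,u_d$ with $N[u_1]\subseteq\dots\subseteq N[u_d]$. *)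

theory Defs
  imports Main
begin

definition simple_graph :: "'v set \<Rightarrow> ('v \<Rightarrow> 'v \<Rightarrow> bool) \<Rightarrow> bool" where
  "simple_graph V E \<longleftrightarrow> finite V \<and>
     (\<forall>u v. E u v \<longrightarrow> u \<in> V \<and> v \<in> V) \<and>
     (\<forall>u v. E u v \<longrightarrow> E v u) \<and> (\<forall>v. \<not> E v v)"

definition closed_nbhd :: "'v set \<Rightarrow> ('v \<Rightarrow> 'v \<Rightarrow> bool) \<Rightarrow> 'v \<Rightarrow> 'v set" where
  "closed_nbhd V E v = {u \<in> V. u = v \<or> E v u}"

definition simple_vertex :: "'v set \<Rightarrow> ('v \<Rightarrow> 'v \<Rightarrow> bool) \<Rightarrow> 'v \<Rightarrow> bool" where
  "simple_vertex V E v \<longleftrightarrow>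
     (\<exists>us. distinct us \<and> set us = closed_nbhd V E v \<and>
        (\<forall>i j. i < j \<and> j < length us \<longrightarrow>
           closed_nbhd V E (us ! i) \<subseteq> closed_nbhd V E (us ! j)))"

text \<open>A rooted host tree is given by a finite node set Nd, a root r \<in> Nd, a parent
function par and an arc weight function w (w x is the weight of the arc from x to
par x).\<close>
definition host_tree :: "'n set \<Rightarrow> 'n \<Rightarrow> ('n \<Rightarrow> 'n) \<Rightarrow> ('n \<Rightarrow> nat) \<Rightarrow> bool" where
  "host_tree Nd r par w \<longleftrightarrow> finite Nd \<and> r \<in> Nd \<and>
     (\<forall>x \<in> Nd - {r}. par x \<in> Nd \<and> w x > 0) \<and>
     (\<forall>x \<in> Nd. \<exists>k. (par ^^ k) x = r)"

definition depth :: "'n \<Rightarrow> ('n \<Rightarrow> 'n) \<Rightarrow> ('n \<Rightarrow> nat) \<Rightarrow> 'n \<Rightarrow> nat" where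
  "depth r par w x = (\<Sum>k < (LEAST k. (par ^^ k) x = r). w ((par ^^ k) x))"

definition tree_adj :: "'n set \<Rightarrow> 'n \<Rightarrow> ('n \<Rightarrow> 'n) \<Rightarrow> 'n \<Rightarrow> 'n \<Rightarrow> bool" where
  "tree_adj Nd r par x y \<longleftrightarrow> x \<in> Nd \<and> y \<in> Nd \<and>
     ((x \<noteq> r \<and> par x = y) \<or> (y \<noteq> r \<and> par y = x))"

definition subtree :: "'n set \<Rightarrow> 'n \<Rightarrow> ('n \<Rightarrow> 'n) \<Rightarrow> 'n set \<Rightarrow> bool" where
  "subtree Nd r par S \<longleftrightarrow> S \<noteq> {} \<and> S \<subseteq> Nd \<and>
     (\<forall>x \<in> S. \<forall>y \<in> S.
        (x, y) \<in> {(a, b). a \<in> S \<and> b \<in> S \<and> tree_adj Nd r par a b}\<^sup>*)"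

text \<open>Depth of the root of a subtree (the root is its node of smallest depth).\<close>
definition root_depth :: "'n \<Rightarrow> ('n \<Rightarrow> 'n) \<Rightarrow> ('n \<Rightarrow> nat) \<Rightarrow> 'n set \<Rightarrow> nat" where
  "root_depth r par w S = Min (depth r par w ` S)"

definition tree_representation ::
  "'v set \<Rightarrow> ('v \<Rightarrow> 'v \<Rightarrow> bool) \<Rightarrow> 'n set \<Rightarrow> 'n \<Rightarrow> ('n \<Rightarrow> 'n) \<Rightarrow> ('v \<Rightarrow> 'n set) \<Rightarrow> bool" where
  "tree_representation V E Nd r par T \<longleftrightarrow>
     (\<forall>v \<in> V. subtree Nd r par (T v)) \<and>
     (\<forall>v \<in> V. \<forall>u \<in> V. v \<noteq> u \<longrightarrow> (E v u \<longleftrightarrow> T v \<inter> T u \<noteq> {}))"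

definition overshadows :: "'n \<Rightarrow> ('n \<Rightarrow> 'n) \<Rightarrow> ('n \<Rightarrow> nat) \<Rightarrow> 'n set \<Rightarrow> 'n set \<Rightarrow> bool" where
  "overshadows r par w T1 T2 \<longleftrightarrow>
     (\<forall>x \<in> T2 - T1. \<forall>y \<in> T2 \<inter> T1. depth r par w y < depth r par w x)"

definition compatible_tree_representation ::
  "'v set \<Rightarrow> ('v \<Rightarrow> 'v \<Rightarrow> bool) \<Rightarrow> 'n set \<Rightarrow> 'n \<Rightarrow> ('n \<Rightarrow> 'n) \<Rightarrow> ('n \<Rightarrow> nat)
     \<Rightarrow> ('v \<Rightarrow> 'n set) \<Rightarrow> bool" where
  "compatible_tree_representation V E Nd r par w T \<longleftrightarrow>
     tree_representation V E Nd r par T \<and>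
     (\<forall>v \<in> V. \<forall>u \<in> V. overshadows r par w (T v) (T u) \<or> overshadows r par w (T u) (T v))"

end

theory Submission
  imports Defs
begin

text \<open>Let v maximise the root depth and let \<rho> be the root of T(v). If two subtrees meet, the
root of the deeper one lies in both; applied to T(v) and a neighbour T(u), the maximality
of v forces \<rho> \<in> T(u). Hence all members of N[v] share \<rho>, and for u, u' in N[v] with
T(u) overshadowing T(u'), every neighbour z of u' meets T(u') in a node no deeper than \<rho>,
which must then lie in T(u) as well; so N[u'] \<subseteq> N[u]. Compatibility thus makes the
closed neighbourhoods of the members of N[v] a chain, and v is simple.\<close>

lemma sorted_list_of_finite_chain:
  fixes f :: "'a \<Rightarrow> 'b set"
  assumes "finite A" and fin: "\<forall>a\<in>A. finite (f a)"
    and chain: "\<forall>a\<in>A. \<forall>b\<in>A. f a \<subseteq> f b \<or> f b \<subseteq> f a"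
  shows "\<exists>us. distinct us \<and> set us = A \<and>
           (\<forall>i j. i < j \<and> j < length us \<longrightarrow> f (us ! i) \<subseteq> f (us ! j))"
proof -
  obtain xs where xs: "set xs = A" "distinct xs" using finite_distinct_list[OF assms(1)] by blast
  define us where "us = sort_key (\<lambda>u. card (f u)) xs"
  have us: "distinct us" "set us = A" using xs unfolding us_def by auto
  have sorted: "sorted (map (\<lambda>u. card (f u)) us)" unfolding us_def by simp
  have "f (us ! i) \<subseteq> f (us ! j)" if ij: "i < j" "j < length us" for i j
  proof (rule ccontr)
    have in_A: "us ! i \<in> A" "us ! j \<in> A" using ij us by auto
    have "card (f (us ! i)) \<le> card (f (us ! j))" using sorted ij by (auto simp: sorted_iff_nth_mono)
    moreover assume "\<not> f (us ! i) \<subseteq> f (us ! j)"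
    then have "f (us ! j) \<subset> f (us ! i)" using chain in_A by blast
    then have "card (f (us ! j)) < card (f (us ! i))" using fin in_A by (intro psubset_card_mono) auto
    ultimately show False by simp
  qed
  then show ?thesis using us by blast
qed

locale rooted_host_tree =
  fixes Nd :: "'n set" and r :: 'n and par :: "'n \<Rightarrow> 'n" and w :: "'n \<Rightarrow> nat"
  assumes host_tree: "host_tree Nd r par w"
begin

abbreviation dep :: "'n \<Rightarrow> nat" where "dep \<equiv> depth r par w"

definition subtree_root :: "'n set \<Rightarrow> 'n \<Rightarrow> bool" where
  "subtree_root S m \<longleftrightarrow> m \<in> S \<and> (\<forall>y\<in>S. dep m \<le> dep y)"

definition upward_path :: "'n set \<Rightarrow> 'n \<Rightarrow> nat \<Rightarrow> bool" where
  "upward_path S x k \<longleftrightarrow> (\<forall>j\<le>k. (par ^^ j) x \<in> S) \<and> (\<forall>j<k. (par ^^ j) x \<noteq> r)"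

lemma upward_path_Suc:
  "upward_path S a (Suc k) \<longleftrightarrow> a \<in> S \<and> a \<noteq> r \<and> upward_path S (par a) k"
proof -
  have shift: "(par ^^ Suc n) a = (par ^^ n) (par a)" for n
    by (simp only: funpow_Suc_right comp_apply)
  have "(\<forall>j\<le>Suc k. P j) \<longleftrightarrow> P 0 \<and> (\<forall>j\<le>k. P (Suc j))" for P
    by (metis Suc_le_mono le0 not0_implies_Suc)
  moreover have "(\<forall>j<Suc k. P j) \<longleftrightarrow> P 0 \<and> (\<forall>j<k. P (Suc j))" for P
    by (rule All_less_Suc2)
  ultimately show ?thesis unfolding upward_path_def by (simp only: shift funpow_0) blast
qed

lemma depth_par:
  assumes "x \<in> Nd" "x \<noteq> r"
  shows "dep x = w x + dep (par x)"
proof -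
  have shift: "(par ^^ Suc n) x = (par ^^ n) (par x)" for n
    by (simp only: funpow_Suc_right comp_apply)
  obtain k where "(par ^^ k) (par x) = r"
    using host_tree assms unfolding host_tree_def by blast
  then have "(LEAST k. (par ^^ k) x = r) = Suc (LEAST k. (par ^^ k) (par x) = r)"
    using Least_Suc[of "\<lambda>k. (par ^^ k) x = r" "Suc k"] assms(2) by (simp only: shift) simp
  then show ?thesis unfolding depth_def by (simp only: sum.lessThan_Suc_shift shift) simp
qed

lemma depth_par_less:
  assumes "x \<in> Nd" "x \<noteq> r"
  shows "dep (par x) < dep x"
  using depth_par[OF assms] host_tree assms unfolding host_tree_def by auto

lemma depth_decreases_along_upward_path:
  assumes "S \<subseteq> Nd" "upward_path S x k" "j < k"
  shows "dep ((par ^^ k) x) < dep ((par ^^ j) x)"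
  using assms
proof (induction k)
  case (Suc k)
  have "(par ^^ k) x \<in> Nd" "(par ^^ k) x \<noteq> r"
    using Suc.prems unfolding upward_path_def by auto
  then have "dep ((par ^^ Suc k) x) < dep ((par ^^ k) x)" by (simp add: depth_par_less)
  moreover have "upward_path S x k" using Suc.prems(2) unfolding upward_path_def by auto
  then have "j = k \<or> dep ((par ^^ k) x) < dep ((par ^^ j) x)"
    using Suc.IH Suc.prems(1,3) by (auto simp: less_Suc_eq)
  ultimately show ?case by auto
qed simp

text \<open>Induction along a path from x to m inside S: a step from m up to its parent would reach a
node of S shallower than m, so every step either extends the upward path or cancels its first
edge.\<close>
lemma upward_path_to_subtree_root:
  assumes S: "subtree Nd r par S" and m: "subtree_root S m" and x: "x \<in> S"
  shows "\<exists>k. (par ^^ k) x = m \<and> upward_path S x k"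
proof -
  have "(x, m) \<in> {(a, b). a \<in> S \<and> b \<in> S \<and> tree_adj Nd r par a b}\<^sup>*"
    using S m x unfolding subtree_def subtree_root_def by auto
  then show ?thesis
  proof (induction rule: converse_rtrancl_induct)
    case base
    show ?case using m unfolding upward_path_def subtree_root_def by (intro exI[of _ 0]) simp
  next
    case (step a b)
    then obtain k where k: "(par ^^ k) b = m" "upward_path S b k" by blast
    have ab: "a \<in> S" "b \<in> S" "a \<in> Nd" "b \<in> Nd"
      and adj: "(a \<noteq> r \<and> par a = b) \<or> (b \<noteq> r \<and> par b = a)"
      using step(1) unfolding tree_adj_def by auto
    from adj show ?case
    proof
      assume "a \<noteq> r \<and> par a = b"
      then have "(par ^^ Suc k) a = m \<and> upward_path S a (Suc k)"
        using k ab upward_path_Suc by (simp add: funpow_swap1)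
      then show ?thesis by blast
    next
      assume ba: "b \<noteq> r \<and> par b = a"
      show ?thesis
      proof (cases k)
        case 0
        then have "dep a < dep m" using k ba ab depth_par_less[of b] by auto
        then show ?thesis using m ab unfolding subtree_root_def by force
      next
        case (Suc k')
        then have "(par ^^ k') a = m \<and> upward_path S a k'"
          using k ba upward_path_Suc by (simp add: funpow_swap1)
        then show ?thesis by blast
      qed
    qed
  qed
qed

lemma deeper_root_in_meeting_subtree:
  assumes S1: "subtree Nd r par S1" "subtree_root S1 m1"
    and S2: "subtree Nd r par S2" "subtree_root S2 m2"
    and x: "x \<in> S1" "x \<in> S2" and deeper: "dep m2 \<le> dep m1"
  shows "m1 \<in> S2"
proof -
  obtain k1 where k1: "(par ^^ k1) x = m1" "upward_path S1 x k1"
    using upward_path_to_subtree_root[OF S1 x(1)] by blast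
  obtain k2 where k2: "(par ^^ k2) x = m2" "upward_path S2 x k2"
    using upward_path_to_subtree_root[OF S2 x(2)] by blast
  have "\<not> k2 < k1"
  proof
    assume "k2 < k1"
    moreover have "S1 \<subseteq> Nd" using S1 unfolding subtree_def by blast
    ultimately have "dep m1 < dep m2" using depth_decreases_along_upward_path k1 k2 by blast
    then show False using deeper by simp
  qed
  then show ?thesis using k1 k2 unfolding upward_path_def by auto
qed

lemma subtree_root_exists:
  assumes "subtree Nd r par S"
  shows "\<exists>m. subtree_root S m"
proof -
  have "finite S" "S \<noteq> {}"
    using assms host_tree finite_subset unfolding subtree_def host_tree_def by auto
  then obtain m where "m \<in> S" "\<forall>y\<in>S. dep m \<le> dep y"
    using ex_min_if_finite[of "dep ` S"] by (auto simp: not_less)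
  then show ?thesis unfolding subtree_root_def by blast
qed

lemma depth_subtree_root:
  assumes "subtree Nd r par S" "subtree_root S m"
  shows "dep m = root_depth r par w S"
proof -
  have "finite S" using assms host_tree finite_subset unfolding subtree_def host_tree_def by auto
  then show ?thesis using assms(2) unfolding root_depth_def subtree_root_def
    by (intro Min_eqI[symmetric]) auto
qed

end

locale compatible_tree_model = rooted_host_tree Nd r par w
  for Nd :: "'n set" and r par w +
  fixes V :: "'v set" and E :: "'v \<Rightarrow> 'v \<Rightarrow> bool" and T :: "'v \<Rightarrow> 'n set"
  assumes graph: "simple_graph V E"
    and compatible: "compatible_tree_representation V E Nd r par w T"
begin

abbreviation N :: "'v \<Rightarrow> 'v set" where "N \<equiv> closed_nbhd V E"

lemma subtree_T: "u \<in> V \<Longrightarrow> subtree Nd r par (T u)"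
  using compatible unfolding compatible_tree_representation_def tree_representation_def by blast

lemma adjacent_iff_meet: "u \<in> V \<Longrightarrow> z \<in> V \<Longrightarrow> u \<noteq> z \<Longrightarrow> E u z \<longleftrightarrow> T u \<inter> T z \<noteq> {}"
  using compatible unfolding compatible_tree_representation_def tree_representation_def by blast

lemma closed_nbhd_subset: "N u \<subseteq> V"
  unfolding closed_nbhd_def by blast

context
  fixes v \<rho>
  assumes v: "v \<in> V"
    and max_root: "\<forall>u\<in>V. root_depth r par w (T u) \<le> root_depth r par w (T v)"
    and \<rho>: "subtree_root (T v) \<rho>"
begin

lemma subtree_root_depth_le_rho: "u \<in> V \<Longrightarrow> subtree_root (T u) m \<Longrightarrow> dep m \<le> dep \<rho>"
  using max_root depth_subtree_root[OF subtree_T] \<rho> v by metis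

lemma closed_nbhd_contains_root:
  assumes u: "u \<in> N v"
  shows "\<rho> \<in> T u"
proof (cases "u = v")
  case True
  then show ?thesis using \<rho> unfolding subtree_root_def by blast
next
  case False
  then have uV: "u \<in> V" and "E v u" using u unfolding closed_nbhd_def by auto
  then obtain x where "x \<in> T v" "x \<in> T u" using adjacent_iff_meet[OF v uV] False by auto
  moreover obtain m where "subtree_root (T u) m" using subtree_root_exists[OF subtree_T[OF uV]] by blast
  ultimately show ?thesis
    using deeper_root_in_meeting_subtree subtree_T v uV \<rho> subtree_root_depth_le_rho by blast
qed

lemma meet_at_node_not_deeper_than_root:
  assumes "a \<in> V" "b \<in> V" "T a \<inter> T b \<noteq> {}"
  shows "\<exists>x \<in> T a \<inter> T b. dep x \<le> dep \<rho>"
proof -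
  obtain ma mb where roots: "subtree_root (T a) ma" "subtree_root (T b) mb"
    using subtree_root_exists subtree_T assms(1,2) by metis
  obtain x where x: "x \<in> T a" "x \<in> T b" using assms(3) by blast
  have "ma \<in> T b \<or> mb \<in> T a"
  proof (cases "dep mb \<le> dep ma")
    case True
    then show ?thesis
      using deeper_root_in_meeting_subtree[OF subtree_T roots(1) subtree_T roots(2)] assms x by blast
  next
    case False
    then show ?thesis
      using deeper_root_in_meeting_subtree[OF subtree_T roots(2) subtree_T roots(1)] assms x by simp
  qed
  then show ?thesis
    using roots subtree_root_depth_le_rho assms unfolding subtree_root_def by blast
qed

lemma closed_nbhd_mono_if_overshadows:
  assumes u: "u \<in> N v" and u': "u' \<in> N v" and ov: "overshadows r par w (T u) (T u')"
  shows "N u' \<subseteq> N u"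
proof
  have uV: "u \<in> V" and u'V: "u' \<in> V" using u u' closed_nbhd_subset by auto
  fix z assume z: "z \<in> N u'"
  then have zV: "z \<in> V" using closed_nbhd_subset by auto
  show "z \<in> N u"
  proof (cases "z = u")
    case True
    then show ?thesis using uV unfolding closed_nbhd_def by auto
  next
    case zu: False
    have "T u \<inter> T z \<noteq> {}"
    proof (cases "z = u'")
      case True
      then show ?thesis using closed_nbhd_contains_root u u' by auto
    next
      case False
      then have "T u' \<inter> T z \<noteq> {}" using z adjacent_iff_meet[OF u'V zV] unfolding closed_nbhd_def by auto
      then obtain a where a: "a \<in> T u'" "a \<in> T z" "dep a \<le> dep \<rho>"
        using meet_at_node_not_deeper_than_root[OF u'V zV] by blast
      have "a \<in> T u"
      proof (rule ccontr)
        assume "a \<notin> T u"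
        then have "dep \<rho> < dep a"
          using ov a closed_nbhd_contains_root[OF u] closed_nbhd_contains_root[OF u']
          unfolding overshadows_def by blast
        then show False using a(3) by simp
      qed
      then show ?thesis using a by auto
    qed
    then have "E u z" using adjacent_iff_meet[OF uV zV] zu by auto
    then show ?thesis using zV unfolding closed_nbhd_def by auto
  qed
qed

end

lemma simple_vertex_if_max_root_depth:
  assumes v: "v \<in> V" and max_root: "\<forall>u\<in>V. root_depth r par w (T u) \<le> root_depth r par w (T v)"
  shows "simple_vertex V E v"
proof -
  obtain \<rho> where \<rho>: "subtree_root (T v) \<rho>" using subtree_root_exists[OF subtree_T[OF v]] by blast
  have "finite V" using graph unfolding simple_graph_def by blast
  then have fin: "finite (N u)" for u using closed_nbhd_subset finite_subset by metis
  have "\<forall>a\<in>N v. \<forall>b\<in>N v. N a \<subseteq> N b \<or> N b \<subseteq> N a"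
    using compatible closed_nbhd_subset closed_nbhd_mono_if_overshadows[OF v max_root \<rho>]
    unfolding compatible_tree_representation_def by blast
  with fin show ?thesis
    unfolding simple_vertex_def by (intro sorted_list_of_finite_chain) auto
qed

end

theorem lemma2:
  fixes V :: "'v set" and E :: "'v \<Rightarrow> 'v \<Rightarrow> bool"
    and Nd :: "'n set" and r :: 'n and par :: "'n \<Rightarrow> 'n" and w :: "'n \<Rightarrow> nat"
    and T :: "'v \<Rightarrow> 'n set"
  assumes "simple_graph V E" and "V \<noteq> {}"
    and "host_tree Nd r par w"
    and "compatible_tree_representation V E Nd r par w T"
  shows "(\<exists>v \<in> V. simple_vertex V E v) \<and>
         (\<forall>v \<in> V. (\<forall>u \<in> V. root_depth r par w (T u) \<le> root_depth r par w (T v))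
                   \<longrightarrow> simple_vertex V E v)"
proof -
  interpret compatible_tree_model Nd r par w V E T
    using assms by unfold_locales
  let ?rd = "\<lambda>u. root_depth r par w (T u)"
  have "finite V" using assms(1) unfolding simple_graph_def by blast
  then have "Max (?rd ` V) \<in> ?rd ` V" using assms(2) by (intro Max_in) auto
  then obtain v where v: "v \<in> V" "Max (?rd ` V) = ?rd v" unfolding image_iff by blast
  then have "\<forall>u\<in>V. ?rd u \<le> ?rd v" using \<open>finite V\<close> by (metis Max_ge finite_imageI imageI)
  then show ?thesis using v(1) simple_vertex_if_max_root_depth by blast
qed

end
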